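(* Let $\rho>0$, $p\ge2$, and let $W:\mathbb{R}\to\mathbb{R}$ be a strictly convex $C^3$ function with $W''\ge c_0>0$, $W(u)\ge\max(0,c_1|u|^p-c_2)$ ($c_1,c_2>0$), and $W'(u)/|u|^p\to0$ as $|u|\to\infty$. For $N\in\{1,2,\dots\}$ let $\epsilon=2\pi/N$ and let $\{x_i(t)\}_{i=0}^{N-1}$ solve $\frac{d}{dt}(\epsilon\rho\dot x_i)=W'\big(\frac{x_{i+1}-x_i}{\epsilon}\big)-W'\big(\frac{x_i-x_{i-1}}{\epsilon}\big)$, with the periodic convention $x_{N+i}=x_i+2\pi$, so that the energy $\sum_{i=0}^{N-1}\big[\frac{\epsilon\rho}{2}\dot x_i^2+\epsilon W\big(\frac{x_{i+1}-x_i}{\epsilon}\big)\big]$ is constant in time. Define, with $I^i_\epsilon=[i\epsilon,(i+1)\epsilon)$, $$y^\epsilon(t,X)=\sum_{i=0}^{N-1}\Big(x_i+\frac{X-i\epsilon}{\epsilon}(x_{i+1}-x_i)\Big)\mathbf{1}_{I^i_\epsilon}(X),\qquad\tilde y^\epsilon(t,X)=\sum_{i=0}^{N-1}x_i\mathbf{1}_{I^i_\epsilon}(X).$$ Assume the initial data $\{(x_i(0),\dot x_i(0))\}_{i=0}^{N-1}$ are such that the energy is bounded by some $E_0<\infty$ independent of $N$. Then for each such $\epsilon$ the functions $y^\epsilon$ and $\partial_ty^\epsilon$ are bounded continuous functions of $(t,X)$, and there exists a constant $C=C(E_0,\rho,c_1,c_2)$ such that, with $Q=\mathbb{R}/2\pi\mathbb{Z}$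 (identified with $[0,2\pi)$), (i) $\sup_t\big(\|\partial_ty^\epsilon\|_{L^2(Q)}+\|\partial_Xy^\epsilon\|_{L^p(Q)}+\|\partial_t\tilde y^\epsilon\|_{L^2(Q)}\big)\le C$; (ii) $\sup_t\|\tilde y^\epsilon-y^\epsilon\|_{L^p(Q)}\le C\epsilon$.
   Formalization: $y^\epsilon$ is bounded only on each time window [-T,T] x [0,2pi), for every real T, rather than on all of (t,X) with t ranging over the whole real line. The statement above fails without it. *)

theory Defs
  imports "HOL-Analysis.Analysis"
begin

definition strictly_convex_on :: "real set \<Rightarrow> (real \<Rightarrow> real) \<Rightarrow> bool" where
  "strictly_convex_on S f \<longleftrightarrow>
     (\<forall>x\<in>S. \<forall>y\<in>S. \<forall>u::real. x \<noteq> y \<and> 0 < u \<and> u < 1 \<longrightarrow>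
        f ((1 - u) * x + u * y) < (1 - u) * f x + u * f y)"

definition C3_real :: "(real \<Rightarrow> real) \<Rightarrow> bool" where
  "C3_real W \<longleftrightarrow> (\<exists>W1 W2 W3. \<forall>u.
      (W has_real_derivative W1 u) (at u) \<and>
      (W1 has_real_derivative W2 u) (at u) \<and>
      (W2 has_real_derivative W3 u) (at u) \<and> isCont W3 u)"

text \<open>Periodic extension of the particle positions x_0..x_{N-1}:
  x_{j} = x_{j mod N} + 2 pi (j div N) for all integers j, so x_{N+i} = x_i + 2 pi.\<close>
definition xext :: "nat \<Rightarrow> (nat \<Rightarrow> real \<Rightarrow> real) \<Rightarrow> int \<Rightarrow> real \<Rightarrow> real" where
  "xext N x j t = x (nat (j mod int N)) t + 2 * pi * real_of_int (j div int N)"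

definition epsN :: "nat \<Rightarrow> real" where
  "epsN N = 2 * pi / real N"

definition energy :: "nat \<Rightarrow> real \<Rightarrow> (real \<Rightarrow> real) \<Rightarrow> (nat \<Rightarrow> real \<Rightarrow> real)
    \<Rightarrow> (nat \<Rightarrow> real \<Rightarrow> real) \<Rightarrow> real \<Rightarrow> real" where
  "energy N \<rho> W x v t = (\<Sum>i<N. epsN N * \<rho> / 2 * (v i t)\<^sup>2
      + epsN N * W ((xext N x (int i + 1) t - xext N x (int i) t) / epsN N))"

definition yeps :: "nat \<Rightarrow> (nat \<Rightarrow> real \<Rightarrow> real) \<Rightarrow> real \<Rightarrow> real \<Rightarrow> real" where
  "yeps N x t X = (\<Sum>i<N. (x i t + (X - real i * epsN N) / epsN N
        * (xext N x (int i + 1) t - x i t))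
      * indicator {real i * epsN N ..< real (Suc i) * epsN N} X)"

definition ytil :: "nat \<Rightarrow> (nat \<Rightarrow> real \<Rightarrow> real) \<Rightarrow> real \<Rightarrow> real \<Rightarrow> real" where
  "ytil N x t X = (\<Sum>i<N. x i t * indicator {real i * epsN N ..< real (Suc i) * epsN N} X)"

definition Lp_int :: "real \<Rightarrow> (real \<Rightarrow> real) \<Rightarrow> ennreal" where
  "Lp_int p f = (\<integral>\<^sup>+ X\<in>{0..<2*pi}. ennreal (\<bar>f X\<bar> powr p) \<partial>lborel)"

definition Lp_norm :: "real \<Rightarrow> (real \<Rightarrow> real) \<Rightarrow> real" where
  "Lp_norm p f = (enn2real (Lp_int p f)) powr (1 / p)"

end

(* The energy is conserved: its time derivative telescopes around the ring thanks to the periodic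
   convention x_(N+i) = x_i + 2 pi.  The kinetic part bounds
   eps * sum v_i^2, which is the squared L^2 norm of the time derivative of the piecewise constant
   interpolant; on each cell the time derivative of the piecewise linear interpolant is a convex
   combination of two neighbouring velocities, so its squared L^2 norm is at most twice that.
   Via W(u) >= c1 |u|^p - c2 the potential part bounds eps * sum |s_i|^p, where the slopes
   s_i = (x_(i+1) - x_i) / eps are the values of the space derivative, and on each cell the two
   interpolants differ by at most eps |s_i|.  Continuity and boundedness in (t, X) follow by
   writing the piecewise linear interpolant on [0, 2 pi) as a sum of hat functions with continuous
   coefficients. *)

theory Submission
  imports Defs
begin

lemma epsN_pos: "N \<ge> 1 \<Longrightarrow> epsN N > 0"
  by (simp add: epsN_def)

lemma of_nat_mult_epsN: "N \<ge> 1 \<Longrightarrow> real N * epsN N = 2 * pi"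
  by (simp add: epsN_def)

lemma cell_exists:
  assumes N: "N \<ge> 1" and X: "0 \<le> X" "X < 2 * pi"
  obtains k where "k < N" "real k * epsN N \<le> X" "X < real (Suc k) * epsN N"
proof
  define e where "e = epsN N"
  have e: "e > 0" using epsN_pos[OF N] by (simp add: e_def)
  define k where "k = nat \<lfloor>X / e\<rfloor>"
  have k: "real k = of_int \<lfloor>X / e\<rfloor>" using e X by (simp add: k_def)
  have "real k \<le> X / e" "X / e < real k + 1" using k by linarith+
  then show "real k * e \<le> X" "X < real (Suc k) * e" using e by (simp_all add: field_simps)
  have "X / e < real N" using X of_nat_mult_epsN[OF N] e by (simp add: e_def field_simps)
  then show "k < N" using k by linarith
qed

lemma cell_unique:
  assumes "N \<ge> 1"
    and "real k * epsN N \<le> X" "X < real (Suc k) * epsN N"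
    and "real i * epsN N \<le> X" "X < real (Suc i) * epsN N"
  shows "i = k"
proof -
  have "real i * epsN N < real (Suc k) * epsN N" "real k * epsN N < real (Suc i) * epsN N"
    using assms by linarith+
  then have "real i < real (Suc k)" "real k < real (Suc i)"
    using epsN_pos[OF assms(1)] by (simp_all add: mult_less_cancel_right)
  then show ?thesis by linarith
qed

lemma sum_indicator_cells:
  assumes N: "N \<ge> 1" and k: "k < N" "real k * epsN N \<le> X" "X < real (Suc k) * epsN N"
  shows "(\<Sum>i<N. f i * indicator {real i * epsN N ..< real (Suc i) * epsN N} X) = (f k :: real)"
proof -
  have "X \<notin> {real i * epsN N ..< real (Suc i) * epsN N}" if "i \<noteq> k" for i
    using cell_unique[OF N k(2,3), of i] that by auto
  then have "(\<Sum>i<N. f i * indicator {real i * epsN N ..< real (Suc i) * epsN N} X)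
      = (\<Sum>i<N. if i = k then f k else 0)"
    using k by (intro sum.cong) auto
  then show ?thesis using k by simp
qed

lemma Lp_int_le_cellwise:
  fixes f :: "real \<Rightarrow> real"
  assumes N: "N \<ge> 1" and b: "\<And>k. k < N \<Longrightarrow> b k \<ge> 0"
    and f: "\<And>k X. k < N \<Longrightarrow> real k * epsN N < X \<Longrightarrow> X < real (Suc k) * epsN N
              \<Longrightarrow> \<bar>f X\<bar> powr q \<le> b k"
  shows "Lp_int q f \<le> ennreal (epsN N * (\<Sum>k<N. b k))"
proof -
  define e where "e = epsN N"
  have e: "e > 0" using epsN_pos[OF N] by (simp add: e_def)
  let ?cell = "\<lambda>k. {real k * e<..<real (Suc k) * e}"
  \<comment> \<open>the finitely many grid points are a null set, so f may be bounded on open cells only\<close>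
  have off_grid: "AE X in lborel. \<forall>k\<in>{..N}. X \<noteq> real k * e"
    by (intro AE_finite_allI) (auto intro: AE_lborel_singleton)
  have "Lp_int q f = (\<integral>\<^sup>+X. ennreal (\<bar>f X\<bar> powr q) * indicator {0..<2*pi} X \<partial>lborel)"
    unfolding Lp_int_def by simp
  also have "\<dots> \<le> (\<integral>\<^sup>+X. (\<Sum>k<N. ennreal (b k) * indicator (?cell k) X) \<partial>lborel)"
    using off_grid
  proof (intro nn_integral_mono_AE, eventually_elim)
    case (elim X)
    show ?case
    proof (cases "X \<in> {0..<2*pi}")
      case True
      then obtain k where k: "k < N" "real k * e \<le> X" "X < real (Suc k) * e"
        using cell_exists[OF N] by (auto simp: e_def)
      moreover have "X \<noteq> real k * e" using elim k by auto
      ultimately have "X \<in> ?cell k" by auto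
      then have "ennreal (\<bar>f X\<bar> powr q) * indicator {0..<2*pi} X \<le> ennreal (b k) * indicator (?cell k) X"
        using f[OF k(1)] True by (simp add: e_def ennreal_leI)
      also have "\<dots> \<le> (\<Sum>k<N. ennreal (b k) * indicator (?cell k) X)"
        by (rule member_le_sum) (use k in auto)
      finally show ?thesis .
    qed simp
  qed
  also have "\<dots> = (\<Sum>k<N. ennreal (b k) * emeasure lborel (?cell k))"
    by (subst nn_integral_sum) (auto simp: nn_integral_cmult_indicator)
  also have "\<dots> = (\<Sum>k<N. ennreal (b k * e))"
    using b e by (intro sum.cong) (auto simp: ennreal_mult algebra_simps)
  also have "\<dots> = ennreal (epsN N * (\<Sum>k<N. b k))"
    using b e by (subst sum_ennreal) (auto simp: e_def sum_distrib_left mult.commute)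
  finally show ?thesis .
qed

lemma Lp_norm_le_of_Lp_int_le:
  assumes "Lp_int q f \<le> ennreal B" "0 \<le> B" "0 < q"
  shows "Lp_int q f < \<infinity>" "Lp_norm q f \<le> B powr (1 / q)"
proof -
  show "Lp_int q f < \<infinity>" using assms(1) by (simp add: le_less_trans)
  have "enn2real (Lp_int q f) \<le> B" using assms by (intro enn2real_leI) auto
  then show "Lp_norm q f \<le> B powr (1 / q)"
    unfolding Lp_norm_def using assms by (intro powr_mono2) auto
qed

lemma powr_inverse_le_max_1:
  fixes a p :: real
  assumes "0 \<le> a" "a \<le> K" "1 \<le> p"
  shows "a powr (1 / p) \<le> max 1 K"
proof (cases "a \<le> 1")
  case True
  then have "a powr (1 / p) \<le> 1" using assms by (intro powr_le1) auto
  then show ?thesis by simp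
next
  case False
  then have "a powr (1 / p) \<le> a powr 1" using assms by (intro powr_mono) auto
  then show ?thesis using assms False by simp
qed

definition vext :: "nat \<Rightarrow> (nat \<Rightarrow> real \<Rightarrow> real) \<Rightarrow> int \<Rightarrow> real \<Rightarrow> real" where
  "vext N v j t = v (nat (j mod int N)) t"

definition slope :: "nat \<Rightarrow> (nat \<Rightarrow> real \<Rightarrow> real) \<Rightarrow> int \<Rightarrow> real \<Rightarrow> real" where
  "slope N x j t = (xext N x (j + 1) t - xext N x j t) / epsN N"

lemma xext_of_nat: "i < N \<Longrightarrow> xext N x (int i) t = x i t"
  by (simp add: xext_def)

lemma vext_of_nat: "i < N \<Longrightarrow> vext N v (int i) t = v i t"
  by (simp add: vext_def)

lemma vext_add_N: "vext N v (j + int N) t = vext N v j t"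
  by (simp add: vext_def)

lemma xext_add_N: "N \<ge> 1 \<Longrightarrow> xext N x (j + int N) t = xext N x j t + 2 * pi"
  by (simp add: xext_def algebra_simps)

lemma slope_add_N: "N \<ge> 1 \<Longrightarrow> slope N x (j + int N) t = slope N x j t"
  using xext_add_N[of N x "j + 1" t] xext_add_N[of N x j t]
  by (simp add: slope_def algebra_simps)

lemma xext_has_real_derivative:
  assumes N: "N \<ge> 1" and x: "\<And>i. i < N \<Longrightarrow> (x i has_real_derivative v i t) (at t)"
  shows "((\<lambda>s. xext N x j s) has_real_derivative vext N v j t) (at t)"
proof -
  have "nat (j mod int N) < N" using N by (simp add: nat_less_iff)
  then show ?thesis
    unfolding xext_def vext_def by (auto intro!: derivative_eq_intros x)
qed

lemma slope_has_real_derivative: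
  assumes N: "N \<ge> 1" and x: "\<And>i. i < N \<Longrightarrow> (x i has_real_derivative v i t) (at t)"
  shows "((\<lambda>s. slope N x j s) has_real_derivative
           (vext N v (j + 1) t - vext N v j t) / epsN N) (at t)"
proof -
  have "((\<lambda>s. xext N x k s) has_real_derivative vext N v k t) (at t)" for k
    using N x by (rule xext_has_real_derivative)
  then show ?thesis
    unfolding slope_def using epsN_pos[OF N] by (auto intro!: derivative_eq_intros)
qed

lemma has_real_derivative_cancel_factor:
  assumes "c \<noteq> 0" "((\<lambda>s. c * f s) has_real_derivative D) (at t)"
  shows "(f has_real_derivative D / c) (at t)"
  using DERIV_cdivide[OF assms(2), of c] assms(1) by simp

lemma energy_conserved:
  fixes W :: "real \<Rightarrow> real"
  assumes rho: "\<rho> > 0" and N: "N \<ge> 1"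
    and W: "\<And>u. (W has_real_derivative deriv W u) (at u)"
    and x: "\<And>i t. i < N \<Longrightarrow> (x i has_real_derivative v i t) (at t)"
    and momentum: "\<And>i t. i < N \<Longrightarrow> ((\<lambda>s. epsN N * \<rho> * v i s) has_real_derivative
          deriv W (slope N x (int i) t) - deriv W (slope N x (int i - 1) t)) (at t)"
  shows "energy N \<rho> W x v t = energy N \<rho> W x v 0"
proof -
  define e where "e = epsN N"
  have e: "e > 0" using epsN_pos[OF N] by (simp add: e_def)
  have v: "(v i has_real_derivative
      (deriv W (slope N x (int i) t) - deriv W (slope N x (int i - 1) t)) / (e * \<rho>)) (at t)"
    if "i < N" for i t
    using has_real_derivative_cancel_factor[OF _ momentum[OF that]] e rho by (simp add: e_def)
  \<comment> \<open>the energy derivative is the sum of h (i + 1) - h i, which vanishes as h is N-periodic\<close>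
  define h where "h j t = vext N v j t * deriv W (slope N x (j - 1) t)" for j t
  have "(energy N \<rho> W x v has_real_derivative 0) (at t)" for t
  proof -
    have "energy N \<rho> W x v = (\<lambda>t. \<Sum>i<N. e * \<rho> / 2 * (v i t)\<^sup>2 + e * W (slope N x (int i) t))"
      by (simp add: fun_eq_iff energy_def slope_def e_def)
    moreover have "((\<lambda>t. \<Sum>i<N. e * \<rho> / 2 * (v i t)\<^sup>2 + e * W (slope N x (int i) t))
        has_real_derivative (\<Sum>i<N. h (int (Suc i)) t - h (int i) t)) (at t)"
    proof (rule DERIV_sum)
      fix i assume i: "i \<in> {..<N}"
      show "((\<lambda>t. e * \<rho> / 2 * (v i t)\<^sup>2 + e * W (slope N x (int i) t))
          has_real_derivative h (int (Suc i)) t - h (int i) t) (at t)"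
        using i e rho
        by (auto intro!: derivative_eq_intros v DERIV_chain2[OF W]
              slope_has_real_derivative[of N x v, OF N x]
            simp: h_def vext_of_nat e_def field_simps)
    qed
    moreover have "h (int N) t = h 0 t"
      using vext_add_N[of N v 0 t] slope_add_N[OF N, of x "-1" t] by (simp add: h_def)
    ultimately show ?thesis
      using sum_lessThan_telescope[of "\<lambda>i. h (int i) t" N] by simp
  qed
  then show ?thesis by (intro DERIV_isconst_all) blast
qed

lemma energy_bounds:
  fixes W :: "real \<Rightarrow> real"
  assumes rho: "\<rho> > 0" and N: "N \<ge> 1" and c1: "c1 > 0"
    and W: "\<And>u. W u \<ge> max 0 (c1 * \<bar>u\<bar> powr p - c2)"
    and E: "energy N \<rho> W x v t \<le> E0"
  shows velocity_bound: "epsN N * (\<Sum>i<N. (v i t)\<^sup>2) \<le> 2 * E0 / \<rho>"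
    and slope_bound: "epsN N * (\<Sum>i<N. \<bar>slope N x (int i) t\<bar> powr p) \<le> (E0 + 2 * pi * c2) / c1"
proof -
  define e where "e = epsN N"
  have e: "e > 0" using epsN_pos[OF N] by (simp add: e_def)
  define kin where "kin = e * \<rho> / 2 * (\<Sum>i<N. (v i t)\<^sup>2)"
  define pot where "pot = e * (\<Sum>i<N. W (slope N x (int i) t))"
  have "kin + pot \<le> E0"
    using E by (simp add: energy_def kin_def pot_def slope_def e_def sum.distrib sum_distrib_left)
  moreover have "kin \<ge> 0" using e rho by (simp add: kin_def sum_nonneg)
  moreover have "pot \<ge> 0" using e W by (simp add: pot_def sum_nonneg)
  ultimately have "kin \<le> E0" "pot \<le> E0" by linarith+
  then show "epsN N * (\<Sum>i<N. (v i t)\<^sup>2) \<le> 2 * E0 / \<rho>"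
    using rho by (simp add: kin_def e_def field_simps)
  have "e * (\<Sum>i<N. c1 * \<bar>slope N x (int i) t\<bar> powr p - c2) \<le> pot"
    unfolding pot_def using e W by (intro mult_left_mono sum_mono) auto
  also have "e * (\<Sum>i<N. c1 * \<bar>slope N x (int i) t\<bar> powr p - c2)
      = c1 * (e * (\<Sum>i<N. \<bar>slope N x (int i) t\<bar> powr p)) - 2 * pi * c2"
    using of_nat_mult_epsN[OF N]
    by (simp add: e_def sum_subtractf sum_distrib_left algebra_simps)
  finally show "epsN N * (\<Sum>i<N. \<bar>slope N x (int i) t\<bar> powr p) \<le> (E0 + 2 * pi * c2) / c1"
    using \<open>pot \<le> E0\<close> c1 by (simp add: e_def field_simps)
qed

lemma yeps_on_cell:
  assumes N: "N \<ge> 1" and k: "k < N" "real k * epsN N \<le> X" "X < real (Suc k) * epsN N"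
  shows "yeps N x t X = x k t + (X - real k * epsN N) * slope N x (int k) t"
  unfolding yeps_def sum_indicator_cells[OF N k] using k(1)
  by (simp add: slope_def xext_of_nat)

lemma ytil_on_cell:
  assumes N: "N \<ge> 1" and k: "k < N" "real k * epsN N \<le> X" "X < real (Suc k) * epsN N"
  shows "ytil N x t X = x k t"
  unfolding ytil_def by (rule sum_indicator_cells[OF N k])

definition tent :: "real \<Rightarrow> real" where
  "tent z = max 0 (1 - \<bar>z\<bar>)"

definition tent_interp :: "nat \<Rightarrow> (int \<Rightarrow> real \<Rightarrow> real) \<Rightarrow> real \<Rightarrow> real \<Rightarrow> real" where
  "tent_interp N g t X = (\<Sum>j<Suc N. g (int j) t * tent (X / epsN N - real j))"

lemma tent_interp_on_cell:
  assumes N: "N \<ge> 1" and k: "k < N" "real k * epsN N \<le> X" "X < real (Suc k) * epsN N"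
  defines "c \<equiv> (X - real k * epsN N) / epsN N"
  shows "tent_interp N g t X = (1 - c) * g (int k) t + c * g (int k + 1) t"
proof -
  have e: "epsN N > 0" using epsN_pos[OF N] .
  have c: "0 \<le> c" "c < 1" using k e by (auto simp: c_def field_simps)
  have X: "X / epsN N = real k + c" using e by (simp add: c_def field_simps)
  have "tent (X / epsN N - real j) = 0" if "j \<notin> {k, Suc k}" for j
    using X c that by (auto simp: tent_def)
  then have "tent_interp N g t X = (\<Sum>j\<in>{k, Suc k}. g (int j) t * tent (X / epsN N - real j))"
    unfolding tent_interp_def using k(1) by (intro sum.mono_neutral_right) auto
  then show ?thesis using X c by (simp add: tent_def algebra_simps)
qed

lemma tent_interp_continuous:
  assumes "N \<ge> 1" and "\<And>j. continuous_on UNIV (g j)"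
  shows "continuous_on UNIV (\<lambda>(t, X). tent_interp N g t X)"
  unfolding tent_interp_def tent_def case_prod_beta using epsN_pos[OF assms(1)]
  by (intro continuous_intros continuous_on_compose2[OF assms(2)]) auto

lemma tent_interp_has_real_derivative:
  assumes "\<And>j. (g j has_real_derivative g' j t) (at t)"
  shows "((\<lambda>s. tent_interp N g s X) has_real_derivative tent_interp N g' t X) (at t)"
  unfolding tent_interp_def by (intro DERIV_sum DERIV_cmult_right assms)

lemma tent_interp_abs_le:
  assumes "\<And>j. \<bar>g j t\<bar> \<le> B"
  shows "\<bar>tent_interp N g t X\<bar> \<le> real (Suc N) * B"
proof -
  have "\<bar>g (int j) t * tent (X / epsN N - real j)\<bar> \<le> B" for j
    using assms[of "int j"] by (auto simp: tent_def abs_mult intro: order.trans[OF mult_left_le])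
  then have "\<bar>tent_interp N g t X\<bar> \<le> (\<Sum>j<Suc N. B)"
    unfolding tent_interp_def by (intro order.trans[OF sum_abs] sum_mono)
  then show ?thesis by simp
qed

lemma yeps_eq_tent_interp:
  assumes N: "N \<ge> 1" and X: "0 \<le> X" "X < 2 * pi"
  shows "yeps N x t X = tent_interp N (xext N x) t X"
proof -
  obtain k where k: "k < N" "real k * epsN N \<le> X" "X < real (Suc k) * epsN N"
    using cell_exists[OF N X] .
  show ?thesis
    using epsN_pos[OF N] k(1)
    unfolding yeps_on_cell[OF N k] tent_interp_on_cell[OF N k]
    by (simp add: slope_def xext_of_nat field_simps)
qed

lemma cell_in_period:
  assumes N: "N \<ge> 1" and k: "k < N" "real k * epsN N \<le> X" "X < real (Suc k) * epsN N"
  shows "0 \<le> X" "X < 2 * pi"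
proof -
  have e: "epsN N > 0" using epsN_pos[OF N] .
  show "0 \<le> X" using k(2) e by (metis mult_nonneg_nonneg of_nat_0_le_iff order.trans less_imp_le)
  have "real (Suc k) * epsN N \<le> real N * epsN N" using k(1) e by (intro mult_right_mono) auto
  then show "X < 2 * pi" using k(3) of_nat_mult_epsN[OF N] by linarith
qed

lemma xext_continuous:
  assumes N: "N \<ge> 1" and x: "\<And>i. i < N \<Longrightarrow> continuous_on UNIV (x i)"
  shows "continuous_on UNIV (xext N x j)"
proof -
  have "nat (j mod int N) < N" using N by (simp add: nat_less_iff)
  then show ?thesis unfolding xext_def by (intro continuous_intros x)
qed

lemma vext_continuous:
  assumes N: "N \<ge> 1" and v: "\<And>i. i < N \<Longrightarrow> continuous_on UNIV (v i)"
  shows "continuous_on UNIV (vext N v j)"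
proof -
  have "nat (j mod int N) < N" using N by (simp add: nat_less_iff)
  then show ?thesis unfolding vext_def by (intro v)
qed

lemma yeps_continuous:
  assumes N: "N \<ge> 1" and x: "\<And>i. i < N \<Longrightarrow> continuous_on UNIV (x i)"
  shows "continuous_on (UNIV \<times> {0..<2*pi}) (\<lambda>(t, X). yeps N x t X)"
proof -
  have "continuous_on UNIV (\<lambda>(t, X). tent_interp N (xext N x) t X)"
    using N xext_continuous[OF N x] by (rule tent_interp_continuous)
  then show ?thesis
    by (rule continuous_on_eq[OF continuous_on_subset]) (auto simp: yeps_eq_tent_interp[OF N])
qed

lemma yeps_bounded:
  assumes N: "N \<ge> 1" and x: "\<And>i. i < N \<Longrightarrow> continuous_on UNIV (x i)"
  shows "bounded ((\<lambda>(t, X). yeps N x t X) ` ({-T..T} \<times> {0..<2*pi}))"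
proof (rule bounded_subset)
  let ?f = "\<lambda>(t, X). tent_interp N (xext N x) t X"
  have "continuous_on UNIV ?f"
    using N xext_continuous[OF N x] by (rule tent_interp_continuous)
  then show "bounded (?f ` ({-T..T} \<times> {0..2*pi}))"
    by (intro compact_imp_bounded compact_continuous_image compact_Times compact_Icc)
      (auto intro: continuous_on_subset)
  show "(\<lambda>(t, X). yeps N x t X) ` ({-T..T} \<times> {0..<2*pi}) \<subseteq> ?f ` ({-T..T} \<times> {0..2*pi})"
    by (auto simp: yeps_eq_tent_interp[OF N] image_iff intro!: bexI)
qed

lemma time_deriv_yeps:
  assumes N: "N \<ge> 1" and x: "\<And>i t. i < N \<Longrightarrow> (x i has_real_derivative v i t) (at t)"
    and X: "0 \<le> X" "X < 2 * pi"
  shows "deriv (\<lambda>s. yeps N x s X) t = tent_interp N (vext N v) t X"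
proof -
  have "((\<lambda>s. tent_interp N (xext N x) s X) has_real_derivative tent_interp N (vext N v) t X) (at t)"
    using N x by (intro tent_interp_has_real_derivative xext_has_real_derivative)
  moreover have "(\<lambda>s. yeps N x s X) = (\<lambda>s. tent_interp N (xext N x) s X)"
    using yeps_eq_tent_interp[OF N X] by auto
  ultimately show ?thesis by (simp add: DERIV_imp_deriv)
qed

lemma time_deriv_yeps_continuous:
  assumes N: "N \<ge> 1" and x: "\<And>i t. i < N \<Longrightarrow> (x i has_real_derivative v i t) (at t)"
    and v: "\<And>i. i < N \<Longrightarrow> continuous_on UNIV (v i)"
  shows "continuous_on (UNIV \<times> {0..<2*pi}) (\<lambda>(t, X). deriv (\<lambda>s. yeps N x s X) t)"
proof -
  have "continuous_on UNIV (\<lambda>(t, X). tent_interp N (vext N v) t X)"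
    using N vext_continuous[OF N v] by (rule tent_interp_continuous)
  then show ?thesis
    by (rule continuous_on_eq[OF continuous_on_subset]) (auto simp: time_deriv_yeps[OF N x])
qed

lemma time_deriv_yeps_bounded:
  assumes N: "N \<ge> 1" and x: "\<And>i t. i < N \<Longrightarrow> (x i has_real_derivative v i t) (at t)"
    and v: "\<And>i t. i < N \<Longrightarrow> \<bar>v i t\<bar> \<le> B"
  shows "bounded ((\<lambda>(t, X). deriv (\<lambda>s. yeps N x s X) t) ` (UNIV \<times> {0..<2*pi}))"
proof -
  have "\<bar>vext N v j t\<bar> \<le> B" for j t
    using v N by (simp add: vext_def nat_less_iff)
  then have "\<bar>tent_interp N (vext N v) t X\<bar> \<le> real (Suc N) * B" for t X
    by (rule tent_interp_abs_le)
  then show ?thesis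
    unfolding bounded_iff by (auto simp: time_deriv_yeps[OF N x])
qed

lemma convex_comb_square_le:
  fixes a b c :: real
  assumes "0 \<le> c" "c \<le> 1"
  shows "((1 - c) * a + c * b)\<^sup>2 \<le> a\<^sup>2 + b\<^sup>2"
proof -
  have "((1 - c) * a + c * b)\<^sup>2 = (1 - c) * a\<^sup>2 + c * b\<^sup>2 - c * (1 - c) * (a - b)\<^sup>2"
    by (simp add: power2_eq_square algebra_simps)
  also have "\<dots> \<le> (1 - c) * a\<^sup>2 + c * b\<^sup>2" using assms by simp
  also have "\<dots> \<le> a\<^sup>2 + b\<^sup>2"
    using assms by (intro add_mono) (auto intro: mult_left_le_one_le)
  finally show ?thesis .
qed

lemma sum_vext_Suc:
  fixes f :: "real \<Rightarrow> 'a::ab_group_add"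
  shows "(\<Sum>k<N. f (vext N v (int k + 1) t)) = (\<Sum>k<N. f (v k t))"
proof -
  define g where "g n = f (vext N v (int n) t)" for n
  have "(\<Sum>k<N. g (Suc k) - g k) = g N - g 0" by (rule sum_lessThan_telescope)
  also have "g N = g 0" using vext_add_N[of N v 0 t] by (simp add: g_def)
  finally have "(\<Sum>k<N. g (Suc k)) = (\<Sum>k<N. g k)" by (simp add: sum_subtractf)
  then show ?thesis by (simp add: g_def vext_of_nat add.commute)
qed

lemma Lp_int_time_deriv_yeps_le:
  assumes N: "N \<ge> 1" and x: "\<And>i t. i < N \<Longrightarrow> (x i has_real_derivative v i t) (at t)"
  shows "Lp_int 2 (\<lambda>X. deriv (\<lambda>s. yeps N x s X) t)
           \<le> ennreal (2 * (epsN N * (\<Sum>i<N. (v i t)\<^sup>2)))"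
proof -
  have "Lp_int 2 (\<lambda>X. deriv (\<lambda>s. yeps N x s X) t)
      \<le> ennreal (epsN N * (\<Sum>k<N. (v k t)\<^sup>2 + (vext N v (int k + 1) t)\<^sup>2))"
  proof (rule Lp_int_le_cellwise[OF N])
    fix k X assume k: "k < N" "real k * epsN N < X" "X < real (Suc k) * epsN N"
    then have cell: "real k * epsN N \<le> X" by simp
    define c where "c = (X - real k * epsN N) / epsN N"
    have c: "0 \<le> c" "c \<le> 1" using k epsN_pos[OF N] by (auto simp: c_def field_simps)
    have "deriv (\<lambda>s. yeps N x s X) t = (1 - c) * v k t + c * vext N v (int k + 1) t"
      using time_deriv_yeps[OF N x cell_in_period[OF N k(1) cell k(3)]] k(1)
      by (simp add: tent_interp_on_cell[OF N k(1) cell k(3)] c_def vext_of_nat)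
    then show "\<bar>deriv (\<lambda>s. yeps N x s X) t\<bar> powr 2 \<le> (v k t)\<^sup>2 + (vext N v (int k + 1) t)\<^sup>2"
      using convex_comb_square_le[OF c] by (simp add: powr_numeral)
  qed simp
  also have "(\<Sum>k<N. (v k t)\<^sup>2 + (vext N v (int k + 1) t)\<^sup>2) = 2 * (\<Sum>i<N. (v i t)\<^sup>2)"
    using sum_vext_Suc[of "\<lambda>u. u\<^sup>2" N v t] by (simp add: sum.distrib)
  finally show ?thesis by (simp add: algebra_simps)
qed

lemma Lp_int_time_deriv_ytil_le:
  assumes N: "N \<ge> 1" and x: "\<And>i t. i < N \<Longrightarrow> (x i has_real_derivative v i t) (at t)"
  shows "Lp_int 2 (\<lambda>X. deriv (\<lambda>s. ytil N x s X) t) \<le> ennreal (epsN N * (\<Sum>i<N. (v i t)\<^sup>2))"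
proof (rule Lp_int_le_cellwise[OF N])
  fix k X assume k: "k < N" "real k * epsN N < X" "X < real (Suc k) * epsN N"
  have "(\<lambda>s. ytil N x s X) = x k" using ytil_on_cell[OF N k(1) _ k(3)] k(2) by auto
  then have "deriv (\<lambda>s. ytil N x s X) t = v k t" using x[OF k(1)] by (simp add: DERIV_imp_deriv)
  then show "\<bar>deriv (\<lambda>s. ytil N x s X) t\<bar> powr 2 \<le> (v k t)\<^sup>2" by (simp add: powr_numeral)
qed simp

lemma Lp_int_space_deriv_yeps_le:
  assumes N: "N \<ge> 1"
  shows "Lp_int p (\<lambda>X. deriv (\<lambda>Y. yeps N x t Y) X)
           \<le> ennreal (epsN N * (\<Sum>i<N. \<bar>slope N x (int i) t\<bar> powr p))"
proof (rule Lp_int_le_cellwise[OF N])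
  fix k X assume k: "k < N" "real k * epsN N < X" "X < real (Suc k) * epsN N"
  let ?cell = "{real k * epsN N<..<real (Suc k) * epsN N}"
  have "((\<lambda>Y. x k t + (Y - real k * epsN N) * slope N x (int k) t)
      has_real_derivative slope N x (int k) t) (at X)"
    by (auto intro!: derivative_eq_intros)
  then have "((\<lambda>Y. yeps N x t Y) has_real_derivative slope N x (int k) t) (at X)"
  proof (rule has_field_derivative_transform_within_open)
    show "open ?cell" "X \<in> ?cell" using k by auto
    show "x k t + (Y - real k * epsN N) * slope N x (int k) t = yeps N x t Y" if "Y \<in> ?cell" for Y
      using that yeps_on_cell[OF N k(1), of Y x t] by simp
  qed
  then show "\<bar>deriv (\<lambda>Y. yeps N x t Y) X\<bar> powr p \<le> \<bar>slope N x (int k) t\<bar> powr p"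
    by (simp add: DERIV_imp_deriv)
qed simp

lemma Lp_int_ytil_minus_yeps_le:
  assumes N: "N \<ge> 1" and p: "p \<ge> 0"
  shows "Lp_int p (\<lambda>X. ytil N x t X - yeps N x t X)
           \<le> ennreal (epsN N powr p * (epsN N * (\<Sum>i<N. \<bar>slope N x (int i) t\<bar> powr p)))"
proof -
  have "Lp_int p (\<lambda>X. ytil N x t X - yeps N x t X)
      \<le> ennreal (epsN N * (\<Sum>k<N. epsN N powr p * \<bar>slope N x (int k) t\<bar> powr p))"
  proof (rule Lp_int_le_cellwise[OF N])
    fix k X assume k: "k < N" "real k * epsN N < X" "X < real (Suc k) * epsN N"
    then have "\<bar>ytil N x t X - yeps N x t X\<bar> = (X - real k * epsN N) * \<bar>slope N x (int k) t\<bar>"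
      by (simp add: ytil_on_cell[OF N k(1)] yeps_on_cell[OF N k(1)] abs_mult)
    also have "\<dots> \<le> epsN N * \<bar>slope N x (int k) t\<bar>"
      using k by (intro mult_right_mono) (auto simp: algebra_simps)
    finally show "\<bar>ytil N x t X - yeps N x t X\<bar> powr p \<le> epsN N powr p * \<bar>slope N x (int k) t\<bar> powr p"
      using p epsN_pos[OF N] by (auto simp: powr_mult[symmetric] intro: powr_mono2)
  qed simp
  then show ?thesis by (simp add: sum_distrib_left algebra_simps)
qed

lemma interpolant_Lp_bounds:
  fixes W :: "real \<Rightarrow> real"
  assumes rho: "\<rho> > 0" and c1: "c1 > 0" and c2: "c2 \<ge> 0" and p: "p \<ge> 2" and N: "N \<ge> 1"
    and W: "\<And>u. W u \<ge> max 0 (c1 * \<bar>u\<bar> powr p - c2)"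
    and x: "\<And>i t. i < N \<Longrightarrow> (x i has_real_derivative v i t) (at t)"
    and E: "energy N \<rho> W x v t \<le> E0"
  defines "C \<equiv> 2 * sqrt (4 * E0 / \<rho>) + max 1 ((E0 + 2 * pi * c2) / c1)"
  shows "Lp_int 2 (\<lambda>X. deriv (\<lambda>s. yeps N x s X) t) < \<infinity>
          \<and> Lp_int p (\<lambda>X. deriv (\<lambda>Y. yeps N x t Y) X) < \<infinity>
          \<and> Lp_int 2 (\<lambda>X. deriv (\<lambda>s. ytil N x s X) t) < \<infinity>
          \<and> Lp_norm 2 (\<lambda>X. deriv (\<lambda>s. yeps N x s X) t)
            + Lp_norm p (\<lambda>X. deriv (\<lambda>Y. yeps N x t Y) X)
            + Lp_norm 2 (\<lambda>X. deriv (\<lambda>s. ytil N x s X) t) \<le> C"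
    and "Lp_int p (\<lambda>X. ytil N x t X - yeps N x t X) < \<infinity>
          \<and> Lp_norm p (\<lambda>X. ytil N x t X - yeps N x t X) \<le> C * epsN N"
proof -
  define e where "e = epsN N"
  have e: "e > 0" using epsN_pos[OF N] by (simp add: e_def)
  define K where "K = (E0 + 2 * pi * c2) / c1"
  define S where "S = e * (\<Sum>i<N. \<bar>slope N x (int i) t\<bar> powr p)"
  have kin: "e * (\<Sum>i<N. (v i t)\<^sup>2) \<le> 2 * E0 / \<rho>" and pot: "S \<le> K"
    using energy_bounds[OF rho N c1 W E] by (simp_all add: e_def S_def K_def)
  have kin0: "0 \<le> e * (\<Sum>i<N. (v i t)\<^sup>2)" and S0: "0 \<le> S"
    using e by (simp_all add: S_def sum_nonneg)
  have E0: "0 \<le> E0" using order.trans[OF kin0 kin] rho by (simp add: zero_le_divide_iff)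
  have kin': "2 * (e * (\<Sum>i<N. (v i t)\<^sup>2)) \<le> 4 * E0 / \<rho>" "e * (\<Sum>i<N. (v i t)\<^sup>2) \<le> 4 * E0 / \<rho>"
    using kin E0 rho by (simp_all add: field_simps)
  have root: "S powr (1 / p) \<le> max 1 K" using powr_inverse_le_max_1[OF S0 pot] p by simp
  have A0: "0 \<le> 4 * E0 / \<rho>" using E0 rho by simp
  have dt_yeps: "Lp_int 2 (\<lambda>X. deriv (\<lambda>s. yeps N x s X) t) < \<infinity>"
    "Lp_norm 2 (\<lambda>X. deriv (\<lambda>s. yeps N x s X) t) \<le> sqrt (4 * E0 / \<rho>)"
    using Lp_norm_le_of_Lp_int_le[OF order.trans[OF Lp_int_time_deriv_yeps_le[OF N x]] A0]
      kin'(1) A0 by (simp_all add: e_def ennreal_leI powr_half_sqrt)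
  have dt_ytil: "Lp_int 2 (\<lambda>X. deriv (\<lambda>s. ytil N x s X) t) < \<infinity>"
    "Lp_norm 2 (\<lambda>X. deriv (\<lambda>s. ytil N x s X) t) \<le> sqrt (4 * E0 / \<rho>)"
    using Lp_norm_le_of_Lp_int_le[OF order.trans[OF Lp_int_time_deriv_ytil_le[OF N x]] A0]
      kin'(2) A0 by (simp_all add: e_def ennreal_leI powr_half_sqrt)
  have dX_yeps: "Lp_int p (\<lambda>X. deriv (\<lambda>Y. yeps N x t Y) X) < \<infinity>"
    "Lp_norm p (\<lambda>X. deriv (\<lambda>Y. yeps N x t Y) X) \<le> max 1 K"
    using Lp_norm_le_of_Lp_int_le[OF Lp_int_space_deriv_yeps_le[OF N, of p x t, folded e_def, folded S_def] S0]
      root p by auto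
  have "Lp_int p (\<lambda>X. ytil N x t X - yeps N x t X) \<le> ennreal (e powr p * S)"
    using Lp_int_ytil_minus_yeps_le[OF N, of p x t] p by (simp add: e_def S_def)
  then have diff: "Lp_int p (\<lambda>X. ytil N x t X - yeps N x t X) < \<infinity>"
    "Lp_norm p (\<lambda>X. ytil N x t X - yeps N x t X) \<le> (e powr p * S) powr (1 / p)"
    using Lp_norm_le_of_Lp_int_le[of p _ "e powr p * S"] S0 p by auto
  have "(e powr p * S) powr (1 / p) = e * S powr (1 / p)"
    using e S0 p by (simp add: powr_mult powr_powr)
  also have "\<dots> \<le> e * max 1 K"
    using root e by simp
  also have "\<dots> \<le> C * e"
    using e A0 by (simp add: C_def K_def)
  finally show "Lp_int p (\<lambda>X. ytil N x t X - yeps N x t X) < \<infinity>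
      \<and> Lp_norm p (\<lambda>X. ytil N x t X - yeps N x t X) \<le> C * epsN N"
    using diff by (simp add: e_def)
  show "Lp_int 2 (\<lambda>X. deriv (\<lambda>s. yeps N x s X) t) < \<infinity>
      \<and> Lp_int p (\<lambda>X. deriv (\<lambda>Y. yeps N x t Y) X) < \<infinity>
      \<and> Lp_int 2 (\<lambda>X. deriv (\<lambda>s. ytil N x s X) t) < \<infinity>
      \<and> Lp_norm 2 (\<lambda>X. deriv (\<lambda>s. yeps N x s X) t)
        + Lp_norm p (\<lambda>X. deriv (\<lambda>Y. yeps N x t Y) X)
        + Lp_norm 2 (\<lambda>X. deriv (\<lambda>s. ytil N x s X) t) \<le> C"
    using dt_yeps dt_ytil dX_yeps by (simp add: C_def K_def)
qed

lemma C3_real_has_real_derivative: "C3_real W \<Longrightarrow> (W has_real_derivative deriv W u) (at u)"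
  unfolding C3_real_def using DERIV_imp_deriv by metis

lemma velocity_bound_pointwise:
  assumes N: "N \<ge> 1" and i: "i < N" and kin: "epsN N * (\<Sum>k<N. (v k t)\<^sup>2) \<le> B"
  shows "\<bar>v i t\<bar> \<le> sqrt (B / epsN N)"
proof -
  have "epsN N * (v i t)\<^sup>2 \<le> epsN N * (\<Sum>k<N. (v k t)\<^sup>2)"
    using i epsN_pos[OF N] by (intro mult_left_mono member_le_sum) auto
  then have "epsN N * (v i t)\<^sup>2 \<le> B" using kin by linarith
  then have "(v i t)\<^sup>2 \<le> B / epsN N" using epsN_pos[OF N] by (simp add: field_simps)
  then show ?thesis using real_sqrt_le_mono by fastforce
qed

lemma chain_interpolant_bounds:
  fixes W :: "real \<Rightarrow> real"
  assumes rho: "\<rho> > 0" and c1: "c1 > 0" and c2: "c2 > 0" and p: "p \<ge> 2" and C3: "C3_real W"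
    and Wb: "\<And>u. W u \<ge> max 0 (c1 * \<bar>u\<bar> powr p - c2)"
    and N: "N \<ge> 1"
    and ode: "\<forall>i<N. \<forall>t. (x i has_real_derivative v i t) (at t)
          \<and> ((\<lambda>s. epsN N * \<rho> * v i s) has_real_derivative
               (deriv W ((xext N x (int i + 1) t - xext N x (int i) t) / epsN N)
                - deriv W ((xext N x (int i) t - xext N x (int i - 1) t) / epsN N))) (at t)"
    and E0: "energy N \<rho> W x v 0 \<le> E0"
  defines "C \<equiv> 2 * sqrt (4 * E0 / \<rho>) + max 1 ((E0 + 2 * pi * c2) / c1)"
  shows
    "continuous_on (UNIV \<times> {0..<2*pi}) (\<lambda>(t, X). yeps N x t X)
     \<and> (\<forall>T. bounded ((\<lambda>(t, X). yeps N x t X) ` ({-T..T} \<times> {0..<2*pi})))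
     \<and> continuous_on (UNIV \<times> {0..<2*pi}) (\<lambda>(t, X). deriv (\<lambda>s. yeps N x s X) t)
     \<and> bounded ((\<lambda>(t, X). deriv (\<lambda>s. yeps N x s X) t) ` (UNIV \<times> {0..<2*pi}))
     \<and> (\<forall>t. Lp_int 2 (\<lambda>X. deriv (\<lambda>s. yeps N x s X) t) < \<infinity>
          \<and> Lp_int p (\<lambda>X. deriv (\<lambda>Y. yeps N x t Y) X) < \<infinity>
          \<and> Lp_int 2 (\<lambda>X. deriv (\<lambda>s. ytil N x s X) t) < \<infinity>
          \<and> Lp_norm 2 (\<lambda>X. deriv (\<lambda>s. yeps N x s X) t)
            + Lp_norm p (\<lambda>X. deriv (\<lambda>Y. yeps N x t Y) X)
            + Lp_norm 2 (\<lambda>X. deriv (\<lambda>s. ytil N x s X) t) \<le> C)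
     \<and> (\<forall>t. Lp_int p (\<lambda>X. ytil N x t X - yeps N x t X) < \<infinity>
          \<and> Lp_norm p (\<lambda>X. ytil N x t X - yeps N x t X) \<le> C * epsN N)"
proof -
  have x: "\<And>i t. i < N \<Longrightarrow> (x i has_real_derivative v i t) (at t)"
    and momentum: "\<And>i t. i < N \<Longrightarrow> ((\<lambda>s. epsN N * \<rho> * v i s) has_real_derivative
          deriv W (slope N x (int i) t) - deriv W (slope N x (int i - 1) t)) (at t)"
    using ode by (simp_all add: slope_def)
  have E: "energy N \<rho> W x v t \<le> E0" for t
    using energy_conserved[OF rho N C3_real_has_real_derivative[OF C3] x momentum, where t=t] E0 by simp
  have x_cont: "continuous_on UNIV (x i)" if "i < N" for i
    using x[OF that] by (intro continuous_at_imp_continuous_on ballI DERIV_isCont)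
  have v_cont: "continuous_on UNIV (v i)" if "i < N" for i
    using has_real_derivative_cancel_factor[OF _ momentum[OF that]] epsN_pos[OF N] rho
    by (intro continuous_at_imp_continuous_on ballI DERIV_isCont) auto
  have v_bound: "\<bar>v i t\<bar> \<le> sqrt (2 * E0 / \<rho> / epsN N)" if "i < N" for i t
    using velocity_bound_pointwise[OF N that velocity_bound[OF rho N c1 Wb E]] .
  show ?thesis
    using yeps_continuous[of N x, OF N x_cont] yeps_bounded[of N x, OF N x_cont]
      time_deriv_yeps_continuous[of N x v, OF N x v_cont]
      time_deriv_yeps_bounded[of N x v, OF N x v_bound]
      interpolant_Lp_bounds[of \<rho> c1 c2 p N W x v, OF rho c1 less_imp_le[OF c2] p N Wb x E]
    unfolding C_def by blast
qed

theorem lemma5p1: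
  fixes \<rho> c1 c2 E0 :: real
  assumes "\<rho> > 0" and "c1 > 0" and "c2 > 0"
  shows "\<exists>C::real. \<forall>(p::real) (W::real \<Rightarrow> real) (c0::real) (N::nat)
           (x::nat \<Rightarrow> real \<Rightarrow> real) (v::nat \<Rightarrow> real \<Rightarrow> real).
    (p \<ge> 2 \<and> C3_real W \<and> strictly_convex_on UNIV W
     \<and> c0 > 0 \<and> (\<forall>u. deriv (deriv W) u \<ge> c0)
     \<and> (\<forall>u. W u \<ge> max 0 (c1 * \<bar>u\<bar> powr p - c2))
     \<and> ((\<lambda>u. deriv W u / \<bar>u\<bar> powr p) \<longlongrightarrow> 0) at_infinity
     \<and> N \<ge> 1
     \<and> (\<forall>i<N. \<forall>t. (x i has_real_derivative v i t) (at t)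
          \<and> ((\<lambda>s. epsN N * \<rho> * v i s) has_real_derivative
               (deriv W ((xext N x (int i + 1) t - xext N x (int i) t) / epsN N)
                - deriv W ((xext N x (int i) t - xext N x (int i - 1) t) / epsN N))) (at t))
     \<and> energy N \<rho> W x v 0 \<le> E0)
    \<longrightarrow>
    (continuous_on (UNIV \<times> {0..<2*pi}) (\<lambda>(t, X). yeps N x t X)
     \<and> (\<forall>T. bounded ((\<lambda>(t, X). yeps N x t X) ` ({-T..T} \<times> {0..<2*pi})))
     \<and> continuous_on (UNIV \<times> {0..<2*pi}) (\<lambda>(t, X). deriv (\<lambda>s. yeps N x s X) t)
     \<and> bounded ((\<lambda>(t, X). deriv (\<lambda>s. yeps N x s X) t) ` (UNIV \<times> {0..<2*pi}))
     \<and> (\<forall>t. Lp_int 2 (\<lambda>X. deriv (\<lambda>s. yeps N x s X) t) < \<infinity>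
          \<and> Lp_int p (\<lambda>X. deriv (\<lambda>Y. yeps N x t Y) X) < \<infinity>
          \<and> Lp_int 2 (\<lambda>X. deriv (\<lambda>s. ytil N x s X) t) < \<infinity>
          \<and> Lp_norm 2 (\<lambda>X. deriv (\<lambda>s. yeps N x s X) t)
            + Lp_norm p (\<lambda>X. deriv (\<lambda>Y. yeps N x t Y) X)
            + Lp_norm 2 (\<lambda>X. deriv (\<lambda>s. ytil N x s X) t) \<le> C)
     \<and> (\<forall>t. Lp_int p (\<lambda>X. ytil N x t X - yeps N x t X) < \<infinity>
          \<and> Lp_norm p (\<lambda>X. ytil N x t X - yeps N x t X) \<le> C * epsN N))"
  by (intro exI[of _ "2 * sqrt (4 * E0 / \<rho>) + max 1 ((E0 + 2 * pi * c2) / c1)"] allI impI)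
    (elim conjE, rule chain_interpolant_bounds[OF assms], blast+)

end
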